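(* Let $(X,d)$ be a path-connected metric space, $x_0\in X$, $n\geq 1$. The map $\pi:\Omega^n(X,x_0)\to\pi_n(X,x_0)$, $\pi(\alpha)=[\alpha]$, is continuous when $\pi_n(X,x_0)$ carries the topology induced by $\rho$. Consequently, the quotient topology and the $\tau$-topology on $\pi_n(X,x_0)$ are each at least as fine as the topology induced by $\rho$.
   Context: $\Omega^n(X,x_0)$ is the set of continuous maps $\alpha:[0,1]^n\to X$ with $\alpha(\partial[0,1]^n)=\{x_0\}$, with uniform metric $\mu(\alpha,\beta)=\sup_t d(\alpha(t),\beta(t))$ (equivalently the compact-open topology). $\rho(a,b)=\inf\{\mu(\alpha,\beta)\mid\alpha\in a,\beta\in b\}$ is a pseudometric on $\pi_n(X,x_0)$. The quotient topology on $\pi_n(X,x_0)$ is the finest topology making $\pi$ continuous. The $\tau$-topology is the finest group topology on $\pi_n(X,x_0)$ making $\pi$ continuous (equivalently, the finest group topology coarser than the quotient topology). *)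

theory Defs
  imports "HOL-Analysis.Analysis"
begin

text \<open>The cube [0,1]^n is modelled as cbox 0 One in real^'n, with n = CARD('n) \<ge> 1
  arbitrary; its boundary is the topological boundary in R^n.\<close>

definition cube :: "(real^'n) set" where
  "cube = cbox 0 One"

definition cube_bdry :: "(real^'n) set" where
  "cube_bdry = cbox 0 One - box 0 One"

definition Omega :: "'a::metric_space set \<Rightarrow> 'a \<Rightarrow> (real^'n \<Rightarrow> 'a) set" where
  "Omega X x0 = {\<alpha>. continuous_on cube \<alpha> \<and> \<alpha> ` cube \<subseteq> X \<and> (\<forall>t\<in>cube_bdry. \<alpha> t = x0)}"

definition mu :: "(real^'n \<Rightarrow> 'a::metric_space) \<Rightarrow> (real^'n \<Rightarrow> 'a) \<Rightarrow> real" where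
  "mu \<alpha> \<beta> = (SUP t\<in>cube. dist (\<alpha> t) (\<beta> t))"

definition Omega_top :: "'a::metric_space set \<Rightarrow> 'a \<Rightarrow> (real^'n \<Rightarrow> 'a) topology" where
  "Omega_top X x0 = topology (\<lambda>U. U \<subseteq> Omega X x0 \<and>
      (\<forall>\<alpha>\<in>U. \<exists>e>0. \<forall>\<beta>\<in>Omega X x0. mu \<alpha> \<beta> < e \<longrightarrow> \<beta> \<in> U))"

definition hclass :: "'a::metric_space set \<Rightarrow> 'a \<Rightarrow> (real^'n \<Rightarrow> 'a) \<Rightarrow> (real^'n \<Rightarrow> 'a) set" where
  "hclass X x0 \<alpha> = {\<beta> \<in> Omega X x0.
      homotopic_with_canon (\<lambda>h. \<forall>t\<in>cube_bdry. h t = x0) cube X \<alpha> \<beta>}"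

definition pin :: "'a::metric_space set \<Rightarrow> 'a \<Rightarrow> ((real^'n \<Rightarrow> 'a) set) set" where
  "pin X x0 = hclass X x0 ` Omega X x0"

definition rho :: "(real^'n \<Rightarrow> 'a::metric_space) set \<Rightarrow> (real^'n \<Rightarrow> 'a) set \<Rightarrow> real" where
  "rho a b = (INF p\<in>a \<times> b. mu (fst p) (snd p))"

definition rho_top :: "'a::metric_space set \<Rightarrow> 'a \<Rightarrow> ((real^'n \<Rightarrow> 'a) set) topology" where
  "rho_top X x0 = topology (\<lambda>U. U \<subseteq> pin X x0 \<and>
      (\<forall>a\<in>U. \<exists>e>0. \<forall>b\<in>pin X x0. rho a b < e \<longrightarrow> b \<in> U))"

definition quot_top :: "'a::metric_space set \<Rightarrow> 'a \<Rightarrow> ((real^'n \<Rightarrow> 'a) set) topology" where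
  "quot_top X x0 = topology (\<lambda>U. U \<subseteq> pin X x0 \<and>
      openin (Omega_top X x0) {\<alpha> \<in> Omega X x0. hclass X x0 \<alpha> \<in> U})"

definition coord0 :: "'n::finite" where
  "coord0 = (SOME k. True)"

definition concat :: "(real^'n::finite \<Rightarrow> 'a) \<Rightarrow> (real^'n \<Rightarrow> 'a) \<Rightarrow> (real^'n \<Rightarrow> 'a)" where
  "concat \<alpha> \<beta> = (\<lambda>t. if t $ coord0 \<le> 1/2
       then \<alpha> (\<chi> i. if i = coord0 then 2 * t $ i else t $ i)
       else \<beta> (\<chi> i. if i = coord0 then 2 * t $ i - 1 else t $ i))"

definition reverse :: "(real^'n::finite \<Rightarrow> 'a) \<Rightarrow> (real^'n \<Rightarrow> 'a)" where
  "reverse \<alpha> = (\<lambda>t. \<alpha> (\<chi> i. if i = coord0 then 1 - t $ i else t $ i))"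

definition pin_mult :: "'a::metric_space set \<Rightarrow> 'a \<Rightarrow> (real^'n::finite \<Rightarrow> 'a) set \<Rightarrow> (real^'n \<Rightarrow> 'a) set \<Rightarrow> (real^'n \<Rightarrow> 'a) set" where
  "pin_mult X x0 a b = hclass X x0 (concat (SOME \<alpha>. \<alpha> \<in> a) (SOME \<beta>. \<beta> \<in> b))"

definition pin_inv :: "'a::metric_space set \<Rightarrow> 'a \<Rightarrow> (real^'n::finite \<Rightarrow> 'a) set \<Rightarrow> (real^'n \<Rightarrow> 'a) set" where
  "pin_inv X x0 a = hclass X x0 (reverse (SOME \<alpha>. \<alpha> \<in> a))"

definition group_topology_pin :: "'a::metric_space set \<Rightarrow> 'a \<Rightarrow> ((real^'n::finite \<Rightarrow> 'a) set) topology \<Rightarrow> bool" where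
  "group_topology_pin X x0 T \<longleftrightarrow> topspace T = pin X x0 \<and>
     continuous_map (prod_topology T T) T (\<lambda>(a,b). pin_mult X x0 a b) \<and>
     continuous_map T T (pin_inv X x0)"

text \<open>tau-topology: finest group topology on pi_n making pi continuous
  (the join of all such group topologies).\<close>
definition tau_top :: "'a::metric_space set \<Rightarrow> 'a \<Rightarrow> ((real^'n::finite \<Rightarrow> 'a) set) topology" where
  "tau_top X x0 = topology_generated_by
     (\<Union>{{U. openin T U} | T. group_topology_pin X x0 T \<and>
          continuous_map (Omega_top X x0) T (hclass X x0)})"

end

theory Submission
  imports Defs
begin

text \<open>Since \<open>rho\<close> is an infimum over representatives, the class map is 1-Lipschitz from \<open>mu\<close>
  to \<open>rho\<close>, hence continuous; the quotient topology, being the finest topology making it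
  continuous, therefore refines the \<open>rho\<close>-topology. For the \<open>tau\<close>-topology it suffices that the
  \<open>rho\<close>-topology is itself a group topology. Concatenating or reversing representatives does not
  increase \<open>mu\<close>, so multiplication and inversion do not increase \<open>rho\<close>; what remains is that
  \<open>rho\<close>-balls are open, i.e. the triangle inequality for \<open>rho\<close>. Given \<open>\<alpha> \<in> a\<close> close to
  \<open>\<beta> \<in> b\<close> and \<open>\<beta>' \<in> b\<close> close to \<open>\<gamma> \<in> c\<close>, the loops \<open>\<alpha> \<cdot> \<beta>\<^sup>-\<^sup>1 \<cdot> \<beta>' \<simeq> \<alpha>\<close> and
  \<open>\<beta> \<cdot> \<beta>\<^sup>-\<^sup>1 \<cdot> \<gamma> \<simeq> \<gamma>\<close> are pointwise within \<open>max (mu \<alpha> \<beta>) (mu \<beta>' \<gamma>)\<close> of each other.\<close>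

section \<open>Faces of the cube\<close>

definition upd_coord0 :: "real^'n::finite \<Rightarrow> real \<Rightarrow> real^'n" where
  "upd_coord0 t x = (\<chi> i. if i = coord0 then x else t $ i)"

definition side_face :: "real^'n::finite \<Rightarrow> bool" where
  "side_face t \<longleftrightarrow> (\<exists>i. i \<noteq> coord0 \<and> (t $ i = 0 \<or> t $ i = 1))"

lemma upd_coord0_nth [simp]:
  "upd_coord0 t x $ coord0 = x"
  "i \<noteq> coord0 \<Longrightarrow> upd_coord0 t x $ i = t $ i"
  by (simp_all add: upd_coord0_def)

lemma upd_coord0_self [simp]: "upd_coord0 t (t $ coord0) = t"
  by (simp add: upd_coord0_def vec_eq_iff)

lemma upd_coord0_upd_coord0 [simp]: "upd_coord0 (upd_coord0 t x) y = upd_coord0 t y"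
  by (simp add: upd_coord0_def vec_eq_iff)

lemma side_face_upd_coord0 [simp]: "side_face (upd_coord0 t x) \<longleftrightarrow> side_face t"
  by (auto simp: side_face_def)

lemma One_nth [simp]: "(One :: real^'n::finite) $ i = 1"
  by (metis Cart_1 one_index)

lemma mem_cube_iff: "t \<in> cube \<longleftrightarrow> (\<forall>i. 0 \<le> t $ i \<and> t $ i \<le> 1)"
  unfolding cube_def mem_box_cart(2) One_nth zero_index ..

lemma mem_cube_bdry_iff:
  "t \<in> cube_bdry \<longleftrightarrow> t \<in> cube \<and> (t $ coord0 = 0 \<or> t $ coord0 = 1 \<or> side_face t)"
proof -
  have bdry: "t \<in> cube_bdry \<longleftrightarrow> t \<in> cube \<and> (\<exists>i. \<not> (0 < t $ i \<and> t $ i < 1))"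
    unfolding cube_bdry_def cube_def[symmetric] Diff_iff mem_box_cart(1) One_nth zero_index by simp
  show ?thesis
  proof (cases "t \<in> cube")
    case True
    have "\<not> (0 < t $ i \<and> t $ i < 1) \<longleftrightarrow> t $ i = 0 \<or> t $ i = 1" for i
    proof -
      have "0 \<le> t $ i" "t $ i \<le> 1"
        using True by (simp_all add: mem_cube_iff)
      then show ?thesis
        by auto
    qed
    then have "t \<in> cube_bdry \<longleftrightarrow> (\<exists>i. t $ i = 0 \<or> t $ i = 1)"
      using True bdry by simp
    then show ?thesis
      using True unfolding side_face_def by metis
  qed (simp add: bdry)
qed

lemma cube_coord0_bounds: "t \<in> cube \<Longrightarrow> 0 \<le> t $ coord0 \<and> t $ coord0 \<le> 1"
  by (simp add: mem_cube_iff)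

lemma cube_bdry_subset_cube: "cube_bdry \<subseteq> cube"
  by (auto simp: mem_cube_bdry_iff)

lemma zero_in_cube: "0 \<in> cube"
  by (simp add: mem_cube_iff)

lemma upd_coord0_in_cube: "t \<in> cube \<Longrightarrow> 0 \<le> x \<Longrightarrow> x \<le> 1 \<Longrightarrow> upd_coord0 t x \<in> cube"
  by (simp add: mem_cube_iff upd_coord0_def)

lemma upd_coord0_in_cube_bdry: "t \<in> cube \<Longrightarrow> x = 0 \<or> x = 1 \<Longrightarrow> upd_coord0 t x \<in> cube_bdry"
  by (auto simp: mem_cube_bdry_iff upd_coord0_in_cube)

lemma upd_coord0_side_face_in_cube_bdry:
  "t \<in> cube \<Longrightarrow> 0 \<le> x \<Longrightarrow> x \<le> 1 \<Longrightarrow> side_face t \<Longrightarrow> upd_coord0 t x \<in> cube_bdry"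
  by (auto simp: mem_cube_bdry_iff upd_coord0_in_cube)

lemma continuous_on_upd_coord0 [continuous_intros]:
  assumes "continuous_on S f" "continuous_on S g"
  shows "continuous_on S (\<lambda>p. upd_coord0 (f p) (g p))"
  unfolding upd_coord0_def
proof (intro continuous_on_vec_lambda)
  fix i
  show "continuous_on S (\<lambda>p. if i = coord0 then g p else f p $ i)"
    using assms by (cases "i = coord0") (auto intro: continuous_intros)
qed

section \<open>Homotopies relative to the boundary\<close>

abbreviation rel_homotopic ::
    "'a::metric_space set \<Rightarrow> 'a \<Rightarrow> (real^'n::finite \<Rightarrow> 'a) \<Rightarrow> (real^'n \<Rightarrow> 'a) \<Rightarrow> bool" where
  "rel_homotopic X x0 f g \<equiv> homotopic_with_canon (\<lambda>h. \<forall>t\<in>cube_bdry. h t = x0) cube X f g"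

lemma Omega_continuous_on: "\<alpha> \<in> Omega X x0 \<Longrightarrow> continuous_on cube \<alpha>"
  and Omega_image: "\<alpha> \<in> Omega X x0 \<Longrightarrow> t \<in> cube \<Longrightarrow> \<alpha> t \<in> X"
  and Omega_cube_bdry: "\<alpha> \<in> Omega X x0 \<Longrightarrow> t \<in> cube_bdry \<Longrightarrow> \<alpha> t = x0"
  by (auto simp: Omega_def)

lemma cube_bdry_property_cong:
  "(\<And>x. x \<in> topspace (top_of_set cube) \<Longrightarrow> h x = k x) \<Longrightarrow>
     (\<forall>t\<in>cube_bdry. h t = x0) \<longleftrightarrow> (\<forall>t\<in>cube_bdry. k t = x0)"
  using cube_bdry_subset_cube by (metis subsetD topspace_euclidean_subtopology)

lemma rel_homotopic_iff:
  "rel_homotopic X x0 f g \<longleftrightarrow>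
     (\<exists>h. continuous_on ({0..1::real} \<times> cube) h \<and> h ` ({0..1} \<times> cube) \<subseteq> X \<and>
        (\<forall>t\<in>cube. h (0, t) = f t) \<and> (\<forall>t\<in>cube. h (1, t) = g t) \<and>
        (\<forall>s\<in>{0..1}. \<forall>t\<in>cube_bdry. h (s, t) = x0))"
proof -
  have "rel_homotopic X x0 f g \<longleftrightarrow>
     (\<exists>h. continuous_map (prod_topology (top_of_set {0..1::real}) (top_of_set cube))
            (top_of_set X) h \<and>
        (\<forall>x\<in>topspace (top_of_set cube). h (0, x) = f x) \<and>
        (\<forall>x\<in>topspace (top_of_set cube). h (1, x) = g x) \<and>
        (\<forall>s\<in>{0..1}. \<forall>t\<in>cube_bdry. h (s, t) = x0))"
    by (rule homotopic_with[where P = "\<lambda>h. \<forall>t\<in>cube_bdry. h t = x0"]) (rule cube_bdry_property_cong)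
  then show ?thesis
    by (simp add: image_subset_iff_funcset)
qed

lemma rel_homotopicI:
  assumes "continuous_on ({0..1::real} \<times> cube) h" "h ` ({0..1} \<times> cube) \<subseteq> X"
    "\<And>t. t \<in> cube \<Longrightarrow> h (0, t) = f t" "\<And>t. t \<in> cube \<Longrightarrow> h (1, t) = g t"
    "\<And>s t. s \<in> {0..1} \<Longrightarrow> t \<in> cube_bdry \<Longrightarrow> h (s, t) = x0"
  shows "rel_homotopic X x0 f g"
  unfolding rel_homotopic_iff using assms by blast

lemma rel_homotopic_imp_Omega:
  assumes "rel_homotopic X x0 f g"
  shows "f \<in> Omega X x0" "g \<in> Omega X x0"
  using homotopic_with_imp_continuous[OF assms] homotopic_with_imp_subset1[OF assms]
    homotopic_with_imp_subset2[OF assms] homotopic_with_imp_property[OF assms]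
  by (auto simp: Omega_def)

lemma rel_homotopic_refl: "f \<in> Omega X x0 \<Longrightarrow> rel_homotopic X x0 f f"
  by (auto simp: Omega_def image_subset_iff_funcset)

lemma rel_homotopic_cong:
  fixes f g f' g' :: "real^'n::finite \<Rightarrow> 'a::metric_space"
  assumes "rel_homotopic X x0 f g" "\<And>t. t \<in> cube \<Longrightarrow> f' t = f t" "\<And>t. t \<in> cube \<Longrightarrow> g' t = g t"
  shows "rel_homotopic X x0 f' g'"
proof (rule homotopic_with_eq[OF assms(1)])
  fix h k :: "real^'n \<Rightarrow> 'a"
  assume "\<And>x. x \<in> topspace (top_of_set cube) \<Longrightarrow> h x = k x"
  then show "(\<forall>t\<in>cube_bdry. h t = x0) \<longleftrightarrow> (\<forall>t\<in>cube_bdry. k t = x0)"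
    by (rule cube_bdry_property_cong)
qed (use assms(2,3) in auto)

lemma rel_homotopic_compose_cube_map:
  assumes "rel_homotopic X x0 f g" "continuous_on cube \<phi>"
    and "\<phi> ` cube \<subseteq> cube" "\<phi> ` cube_bdry \<subseteq> cube_bdry"
  shows "rel_homotopic X x0 (f \<circ> \<phi>) (g \<circ> \<phi>)"
proof (rule homotopic_with_compose_continuous_right)
  show "homotopic_with_canon (\<lambda>h. \<forall>t\<in>cube_bdry. (h \<circ> \<phi>) t = x0) cube X f g"
    by (rule homotopic_with_mono[OF assms(1)]) (use assms(4) in auto)
qed (use assms(2,3) in auto)

text \<open>Only the faces transverse to \<open>coord0\<close> are kept at \<open>x0\<close>, so that such families can be
  glued along \<open>coord0\<close>.\<close>
definition side_family ::
    "'a::metric_space set \<Rightarrow> 'a \<Rightarrow> (real \<Rightarrow> real^'n::finite \<Rightarrow> 'a) \<Rightarrow> bool" where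
  "side_family X x0 F \<longleftrightarrow> continuous_on ({0..1} \<times> cube) (\<lambda>p. F (fst p) (snd p)) \<and>
     (\<forall>s\<in>{0..1}. \<forall>u\<in>cube. F s u \<in> X \<and> (side_face u \<longrightarrow> F s u = x0))"

lemma side_family_continuous_on:
  "side_family X x0 F \<Longrightarrow> continuous_on ({0..1} \<times> cube) (\<lambda>p. F (fst p) (snd p))"
  by (simp add: side_family_def)

lemma continuous_on_family_upd_coord0:
  assumes "continuous_on ({0..1} \<times> cube) (\<lambda>p. F (fst p) (snd p))" "continuous_on D c"
    and "\<And>p. p \<in> D \<Longrightarrow> fst p \<in> {0..1} \<and> snd p \<in> cube \<and> 0 \<le> c p \<and> c p \<le> 1"
  shows "continuous_on D (\<lambda>p. F (fst p) (upd_coord0 (snd p) (c p)))"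
  using continuous_on_compose2[OF assms(1), of D "\<lambda>p. (fst p, upd_coord0 (snd p) (c p))"] assms(2,3)
  by (force intro!: continuous_intros upd_coord0_in_cube)

lemma side_family_comp_upd_coord0:
  fixes \<beta> :: "real^'n::finite \<Rightarrow> 'a::metric_space"
  assumes "\<beta> \<in> Omega X x0" "continuous_on ({0..1} \<times> cube) c"
    and "\<And>s u. s \<in> {0..1} \<Longrightarrow> u \<in> cube \<Longrightarrow> 0 \<le> c (s, u) \<and> c (s, u) \<le> 1"
  shows "side_family X x0 (\<lambda>s u. \<beta> (upd_coord0 u (c (s, u))))"
  unfolding side_family_def
proof (intro conjI ballI impI)
  show "continuous_on ({0..1} \<times> cube) (\<lambda>p. \<beta> (upd_coord0 (snd p) (c (fst p, snd p))))"
    using continuous_on_compose2[OF Omega_continuous_on[OF assms(1)], of "{0..1} \<times> cube"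
        "\<lambda>p. upd_coord0 (snd p) (c p)"] assms(2,3)
    by (force intro!: continuous_intros upd_coord0_in_cube)
  fix s :: real and u :: "real^'n"
  assume "s \<in> {0..1}" "u \<in> cube"
  then show "\<beta> (upd_coord0 u (c (s, u))) \<in> X"
    using assms(3) by (blast intro: Omega_image[OF assms(1)] upd_coord0_in_cube)
  assume "side_face u"
  then show "\<beta> (upd_coord0 u (c (s, u))) = x0"
    using assms(3) \<open>s \<in> {0..1}\<close> \<open>u \<in> cube\<close>
    by (blast intro: Omega_cube_bdry[OF assms(1)] upd_coord0_side_face_in_cube_bdry)
qed

lemma side_family_const: "\<alpha> \<in> Omega X x0 \<Longrightarrow> side_family X x0 (\<lambda>s. \<alpha>)"
  using side_family_comp_upd_coord0[of \<alpha> X x0 "\<lambda>p. snd p $ coord0"]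
  by (simp add: mem_cube_iff continuous_intros)

lemma rel_homotopic_side_family:
  assumes "rel_homotopic X x0 f g"
  shows "\<exists>F. side_family X x0 F \<and> (\<forall>s\<in>{0..1}. \<forall>t\<in>cube_bdry. F s t = x0) \<and>
    (\<forall>t\<in>cube. F 0 t = f t \<and> F 1 t = g t)"
proof -
  obtain h where h: "continuous_on ({0..1::real} \<times> cube) h" "h ` ({0..1} \<times> cube) \<subseteq> X"
    "\<forall>t\<in>cube. h (0, t) = f t" "\<forall>t\<in>cube. h (1, t) = g t" "\<forall>s\<in>{0..1}. \<forall>t\<in>cube_bdry. h (s, t) = x0"
    using assms unfolding rel_homotopic_iff by blast
  then show ?thesis
    by (intro exI[of _ "\<lambda>s u. h (s, u)"]) (auto simp: side_family_def mem_cube_bdry_iff)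
qed

lemma side_family_rel_homotopic:
  assumes F: "side_family X x0 F"
    and ends: "\<And>s t. s \<in> {0..1} \<Longrightarrow> t \<in> cube \<Longrightarrow> F s (upd_coord0 t 0) = x0 \<and> F s (upd_coord0 t 1) = x0"
  shows "rel_homotopic X x0 (F 0) (F 1)"
proof (rule rel_homotopicI[where h = "\<lambda>p. F (fst p) (snd p)"])
  show "continuous_on ({0..1} \<times> cube) (\<lambda>p. F (fst p) (snd p))"
    "(\<lambda>p. F (fst p) (snd p)) ` ({0..1} \<times> cube) \<subseteq> X"
    using F by (auto simp: side_family_def)
  show "F (fst (s, t)) (snd (s, t)) = x0" if "s \<in> {0..1}" "t \<in> cube_bdry" for s t
  proof -
    have t: "t \<in> cube" "t $ coord0 = 0 \<or> t $ coord0 = 1 \<or> side_face t"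
      using that(2) by (auto simp: mem_cube_bdry_iff)
    then show ?thesis
      using ends[OF that(1) t(1)] F that(1)
      by (metis side_family_def snd_conv fst_conv upd_coord0_self)
  qed
qed simp_all

section \<open>Concatenation and reversal\<close>

lemma concat_eq_upd_coord0:
  "concat f g t = (if t $ coord0 \<le> 1/2 then f (upd_coord0 t (2 * t $ coord0))
     else g (upd_coord0 t (2 * t $ coord0 - 1)))"
  by (simp add: concat_def upd_coord0_def cong: if_cong)

lemma reverse_eq_upd_coord0: "reverse f t = f (upd_coord0 t (1 - t $ coord0))"
  by (simp add: reverse_def upd_coord0_def cong: if_cong)

text \<open>Thirds rather than nested halves, so that reversing a triple concatenation just reverses
  the order of its pieces.\<close>
definition concat3 ::
    "(real^'n::finite \<Rightarrow> 'a) \<Rightarrow> (real^'n \<Rightarrow> 'a) \<Rightarrow> (real^'n \<Rightarrow> 'a) \<Rightarrow> real^'n \<Rightarrow> 'a" where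
  "concat3 f g h t =
     (if t $ coord0 \<le> 1/3 then f (upd_coord0 t (3 * t $ coord0))
      else if t $ coord0 \<le> 2/3 then g (upd_coord0 t (3 * t $ coord0 - 1))
      else h (upd_coord0 t (3 * t $ coord0 - 2)))"

lemma concat_upd_coord0_ends [simp]:
  "concat f g (upd_coord0 t 0) = f (upd_coord0 t 0)"
  "concat f g (upd_coord0 t 1) = g (upd_coord0 t 1)"
  by (simp_all add: concat_eq_upd_coord0)

lemma concat3_upd_coord0_ends [simp]:
  "concat3 f g h (upd_coord0 t 0) = f (upd_coord0 t 0)"
  "concat3 f g h (upd_coord0 t 1) = h (upd_coord0 t 1)"
  by (simp_all add: concat3_def)

lemma concat_rel:
  assumes "\<And>c. 0 \<le> c \<Longrightarrow> c \<le> 1 \<Longrightarrow> R (f (upd_coord0 t c)) (f' (upd_coord0 t c))"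
    and "\<And>c. 0 \<le> c \<Longrightarrow> c \<le> 1 \<Longrightarrow> R (g (upd_coord0 t c)) (g' (upd_coord0 t c))"
    and "t \<in> cube"
  shows "R (concat f g t) (concat f' g' t)"
proof -
  have "0 \<le> t $ coord0" "t $ coord0 \<le> 1"
    using assms(3) by (auto simp: mem_cube_iff)
  then show ?thesis
    using assms(1)[of "2 * t $ coord0"] assms(2)[of "2 * t $ coord0 - 1"]
    by (simp add: concat_eq_upd_coord0)
qed

lemma concat3_rel:
  assumes "\<And>c. 0 \<le> c \<Longrightarrow> c \<le> 1 \<Longrightarrow> R (f (upd_coord0 t c)) (f' (upd_coord0 t c))"
    and "\<And>c. 0 \<le> c \<Longrightarrow> c \<le> 1 \<Longrightarrow> R (g (upd_coord0 t c)) (g' (upd_coord0 t c))"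
    and "\<And>c. 0 \<le> c \<Longrightarrow> c \<le> 1 \<Longrightarrow> R (h (upd_coord0 t c)) (h' (upd_coord0 t c))"
    and "t \<in> cube"
  shows "R (concat3 f g h t) (concat3 f' g' h' t)"
proof -
  have "0 \<le> t $ coord0" "t $ coord0 \<le> 1"
    using assms(4) by (auto simp: mem_cube_iff)
  then show ?thesis
    using assms(1)[of "3 * t $ coord0"] assms(2)[of "3 * t $ coord0 - 1"]
      assms(3)[of "3 * t $ coord0 - 2"]
    by (simp add: concat3_def)
qed

lemma side_family_concat:
  fixes F G :: "real \<Rightarrow> real^'n::finite \<Rightarrow> 'a::metric_space"
  assumes F: "side_family X x0 F" and G: "side_family X x0 G"
    and FG: "\<And>s t. s \<in> {0..1} \<Longrightarrow> t \<in> cube \<Longrightarrow> F s (upd_coord0 t 1) = G s (upd_coord0 t 0)"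
  shows "side_family X x0 (\<lambda>s. concat (F s) (G s))"
  unfolding side_family_def
proof (intro conjI ballI impI)
  show "continuous_on ({0..1} \<times> cube) (\<lambda>p. concat (F (fst p)) (G (fst p)) (snd p))"
    unfolding concat_eq_upd_coord0
  proof (rule continuous_on_cases_le[where h = "\<lambda>p. snd p $ coord0"])
    show "continuous_on {p \<in> {0..1} \<times> cube. snd p $ coord0 \<le> 1/2}
        (\<lambda>p. F (fst p) (upd_coord0 (snd p) (2 * snd p $ coord0)))"
      by (rule continuous_on_family_upd_coord0[OF side_family_continuous_on[OF F]])
        (auto intro!: continuous_intros dest: cube_coord0_bounds)
    show "continuous_on {p \<in> {0..1} \<times> cube. 1/2 \<le> snd p $ coord0}
        (\<lambda>p. G (fst p) (upd_coord0 (snd p) (2 * snd p $ coord0 - 1)))"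
      by (rule continuous_on_family_upd_coord0[OF side_family_continuous_on[OF G]])
        (auto intro!: continuous_intros dest: cube_coord0_bounds)
    show "F (fst p) (upd_coord0 (snd p) (2 * snd p $ coord0)) =
        G (fst p) (upd_coord0 (snd p) (2 * snd p $ coord0 - 1))"
      if "p \<in> {0..1} \<times> cube" "snd p $ coord0 = 1/2" for p
    proof -
      have "2 * snd p $ coord0 = 1"
        using that(2) by simp
      then show ?thesis
        using that(1) FG[of "fst p" "snd p"] by (auto simp: mem_Times_iff)
    qed
  qed (intro continuous_intros)
  fix s :: real and u :: "real^'n"
  assume "s \<in> {0..1}" "u \<in> cube"
  then show "concat (F s) (G s) u \<in> X"
    using F G by (intro concat_rel[where R = "\<lambda>y _. y \<in> X"])
      (auto simp: side_family_def upd_coord0_in_cube)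
  assume "side_face u"
  then show "concat (F s) (G s) u = x0"
    using F G \<open>s \<in> {0..1}\<close> \<open>u \<in> cube\<close>
    by (intro concat_rel[where R = "\<lambda>y _. y = x0"]) (auto simp: side_family_def upd_coord0_in_cube)
qed

lemma side_family_concat3:
  fixes F G H :: "real \<Rightarrow> real^'n::finite \<Rightarrow> 'a::metric_space"
  assumes F: "side_family X x0 F" and G: "side_family X x0 G" and H: "side_family X x0 H"
    and FG: "\<And>s t. s \<in> {0..1} \<Longrightarrow> t \<in> cube \<Longrightarrow> F s (upd_coord0 t 1) = G s (upd_coord0 t 0)"
    and GH: "\<And>s t. s \<in> {0..1} \<Longrightarrow> t \<in> cube \<Longrightarrow> G s (upd_coord0 t 1) = H s (upd_coord0 t 0)"
  shows "side_family X x0 (\<lambda>s. concat3 (F s) (G s) (H s))"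
  unfolding side_family_def
proof (intro conjI ballI impI)
  show "continuous_on ({0..1} \<times> cube) (\<lambda>p. concat3 (F (fst p)) (G (fst p)) (H (fst p)) (snd p))"
    unfolding concat3_def
  proof (rule continuous_on_cases_le[where h = "\<lambda>p. snd p $ coord0"])
    show "continuous_on {p \<in> {0..1} \<times> cube. snd p $ coord0 \<le> 1/3}
        (\<lambda>p. F (fst p) (upd_coord0 (snd p) (3 * snd p $ coord0)))"
      by (rule continuous_on_family_upd_coord0[OF side_family_continuous_on[OF F]])
        (auto intro!: continuous_intros dest: cube_coord0_bounds)
    show "continuous_on {p \<in> {0..1} \<times> cube. 1/3 \<le> snd p $ coord0}
        (\<lambda>p. if snd p $ coord0 \<le> 2/3 then G (fst p) (upd_coord0 (snd p) (3 * snd p $ coord0 - 1))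
             else H (fst p) (upd_coord0 (snd p) (3 * snd p $ coord0 - 2)))"
    proof (rule continuous_on_cases_le[where h = "\<lambda>p. snd p $ coord0"])
      show "continuous_on {p \<in> {p \<in> {0..1} \<times> cube. 1/3 \<le> snd p $ coord0}. snd p $ coord0 \<le> 2/3}
          (\<lambda>p. G (fst p) (upd_coord0 (snd p) (3 * snd p $ coord0 - 1)))"
        by (rule continuous_on_family_upd_coord0[OF side_family_continuous_on[OF G]])
          (auto intro!: continuous_intros dest: cube_coord0_bounds)
      show "continuous_on {p \<in> {p \<in> {0..1} \<times> cube. 1/3 \<le> snd p $ coord0}. 2/3 \<le> snd p $ coord0}
          (\<lambda>p. H (fst p) (upd_coord0 (snd p) (3 * snd p $ coord0 - 2)))"
        by (rule continuous_on_family_upd_coord0[OF side_family_continuous_on[OF H]])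
          (auto intro!: continuous_intros dest: cube_coord0_bounds)
      show "G (fst p) (upd_coord0 (snd p) (3 * snd p $ coord0 - 1)) =
          H (fst p) (upd_coord0 (snd p) (3 * snd p $ coord0 - 2))"
        if "p \<in> {p \<in> {0..1} \<times> cube. 1/3 \<le> snd p $ coord0}" "snd p $ coord0 = 2/3" for p
      proof -
        have "3 * snd p $ coord0 - 1 = 1" "3 * snd p $ coord0 - 2 = 0"
          using that(2) by simp_all
        then show ?thesis
          using that(1) GH[of "fst p" "snd p"] by (auto simp: mem_Times_iff)
      qed
    qed (intro continuous_intros)
    show "F (fst p) (upd_coord0 (snd p) (3 * snd p $ coord0)) =
        (if snd p $ coord0 \<le> 2/3 then G (fst p) (upd_coord0 (snd p) (3 * snd p $ coord0 - 1))
         else H (fst p) (upd_coord0 (snd p) (3 * snd p $ coord0 - 2)))"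
      if "p \<in> {0..1} \<times> cube" "snd p $ coord0 = 1/3" for p
    proof -
      have "3 * snd p $ coord0 = 1" "3 * snd p $ coord0 - 1 = 0"
        using that(2) by simp_all
      then show ?thesis
        using that(1) FG[of "fst p" "snd p"] by (auto simp: mem_Times_iff)
    qed
  qed (intro continuous_intros)
  fix s :: real and u :: "real^'n"
  assume "s \<in> {0..1}" "u \<in> cube"
  then show "concat3 (F s) (G s) (H s) u \<in> X"
    using F G H by (intro concat3_rel[where R = "\<lambda>y _. y \<in> X"])
      (auto simp: side_family_def upd_coord0_in_cube)
  assume "side_face u"
  then show "concat3 (F s) (G s) (H s) u = x0"
    using F G H \<open>s \<in> {0..1}\<close> \<open>u \<in> cube\<close>
    by (intro concat3_rel[where R = "\<lambda>y _. y = x0"]) (auto simp: side_family_def upd_coord0_in_cube)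
qed

lemma homotopic_concat:
  assumes "rel_homotopic X x0 f f'" "rel_homotopic X x0 g g'"
  shows "rel_homotopic X x0 (concat f g) (concat f' g')"
proof -
  obtain F where F: "side_family X x0 F" "\<forall>s\<in>{0..1}. \<forall>t\<in>cube_bdry. F s t = x0"
    "\<forall>t\<in>cube. F 0 t = f t \<and> F 1 t = f' t"
    using rel_homotopic_side_family[OF assms(1)] by blast
  obtain G where G: "side_family X x0 G" "\<forall>s\<in>{0..1}. \<forall>t\<in>cube_bdry. G s t = x0"
    "\<forall>t\<in>cube. G 0 t = g t \<and> G 1 t = g' t"
    using rel_homotopic_side_family[OF assms(2)] by blast
  have "rel_homotopic X x0 (concat (F 0) (G 0)) (concat (F 1) (G 1))"
    by (rule side_family_rel_homotopic[OF side_family_concat[OF F(1) G(1)]])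
      (simp_all add: F(2) G(2) upd_coord0_in_cube_bdry)
  then show ?thesis
    by (rule rel_homotopic_cong)
      (auto intro!: concat_rel[where R = "(=)"] simp: F(3) G(3) upd_coord0_in_cube)
qed

lemma homotopic_concat3:
  assumes "rel_homotopic X x0 f f'" "rel_homotopic X x0 g g'" "rel_homotopic X x0 h h'"
  shows "rel_homotopic X x0 (concat3 f g h) (concat3 f' g' h')"
proof -
  obtain F where F: "side_family X x0 F" "\<forall>s\<in>{0..1}. \<forall>t\<in>cube_bdry. F s t = x0"
    "\<forall>t\<in>cube. F 0 t = f t \<and> F 1 t = f' t"
    using rel_homotopic_side_family[OF assms(1)] by blast
  obtain G where G: "side_family X x0 G" "\<forall>s\<in>{0..1}. \<forall>t\<in>cube_bdry. G s t = x0"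
    "\<forall>t\<in>cube. G 0 t = g t \<and> G 1 t = g' t"
    using rel_homotopic_side_family[OF assms(2)] by blast
  obtain H where H: "side_family X x0 H" "\<forall>s\<in>{0..1}. \<forall>t\<in>cube_bdry. H s t = x0"
    "\<forall>t\<in>cube. H 0 t = h t \<and> H 1 t = h' t"
    using rel_homotopic_side_family[OF assms(3)] by blast
  have "rel_homotopic X x0 (concat3 (F 0) (G 0) (H 0)) (concat3 (F 1) (G 1) (H 1))"
    by (rule side_family_rel_homotopic[OF side_family_concat3[OF F(1) G(1) H(1)]])
      (simp_all add: F(2) G(2) H(2) upd_coord0_in_cube_bdry)
  then show ?thesis
    by (rule rel_homotopic_cong)
      (auto intro!: concat3_rel[where R = "(=)"] simp: F(3) G(3) H(3) upd_coord0_in_cube)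
qed

lemma homotopic_reverse:
  fixes f g :: "real^'n::finite \<Rightarrow> 'a::metric_space"
  assumes "rel_homotopic X x0 f g"
  shows "rel_homotopic X x0 (reverse f) (reverse g)"
proof -
  define \<phi> :: "real^'n \<Rightarrow> real^'n" where "\<phi> t = upd_coord0 t (1 - t $ coord0)" for t
  have "\<phi> ` cube \<subseteq> cube"
    by (auto simp: \<phi>_def mem_cube_iff intro!: upd_coord0_in_cube)
  moreover have "\<phi> ` cube_bdry \<subseteq> cube_bdry"
    by (auto simp: \<phi>_def mem_cube_bdry_iff intro!: upd_coord0_in_cube) (auto simp: mem_cube_iff)
  moreover have "reverse k = k \<circ> \<phi>" for k :: "real^'n \<Rightarrow> 'a"
    by (simp add: fun_eq_iff reverse_eq_upd_coord0 \<phi>_def)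
  ultimately show ?thesis
    using rel_homotopic_compose_cube_map[OF assms, of \<phi>] by (simp add: \<phi>_def continuous_intros)
qed

lemma concat_in_Omega: "f \<in> Omega X x0 \<Longrightarrow> g \<in> Omega X x0 \<Longrightarrow> concat f g \<in> Omega X x0"
  by (meson homotopic_concat rel_homotopic_imp_Omega(1) rel_homotopic_refl)

lemma reverse_in_Omega: "f \<in> Omega X x0 \<Longrightarrow> reverse f \<in> Omega X x0"
  by (meson homotopic_reverse rel_homotopic_imp_Omega(1) rel_homotopic_refl)

lemma reverse_reverse [simp]: "reverse (reverse f) = f"
  by (simp add: fun_eq_iff reverse_eq_upd_coord0)

lemma reverse_concat3:
  assumes "f \<in> Omega X x0" "g \<in> Omega X x0" "h \<in> Omega X x0" "t \<in> cube"
  shows "reverse (concat3 f g h) t = concat3 (reverse h) (reverse g) (reverse f) t"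
proof -
  have ends: "k (upd_coord0 t 0) = x0" "k (upd_coord0 t 1) = x0" if "k \<in> Omega X x0" for k
    using Omega_cube_bdry[OF that] upd_coord0_in_cube_bdry[OF assms(4)] by auto
  show ?thesis
    unfolding concat3_def reverse_eq_upd_coord0
    using ends[OF assms(1)] ends[OF assms(2)] ends[OF assms(3)]
    by (auto simp: algebra_simps)
qed

lemma homotopic_reparam:
  fixes \<alpha> :: "real^'n::finite \<Rightarrow> 'a::metric_space"
  assumes \<alpha>: "\<alpha> \<in> Omega X x0" and \<psi>: "continuous_on {0..1} \<psi>"
    and \<psi>01: "\<And>x. 0 \<le> x \<Longrightarrow> x \<le> 1 \<Longrightarrow> 0 \<le> \<psi> x \<and> \<psi> x \<le> 1" and "\<psi> 0 = 0" "\<psi> 1 = 1"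
  shows "rel_homotopic X x0 (\<lambda>t. \<alpha> (upd_coord0 t (\<psi> (t $ coord0)))) \<alpha>"
proof -
  define c where "c p = (1 - fst p) * \<psi> (snd p $ coord0) + fst p * snd p $ coord0"
    for p :: "real \<times> (real^'n)"
  have c01: "0 \<le> c (s, u) \<and> c (s, u) \<le> 1" if "s \<in> {0..1}" "u \<in> cube" for s u
    using convex_bound_le[of "\<psi> (u $ coord0)" 1 "u $ coord0" "1 - s" s] \<psi>01[of "u $ coord0"]
      cube_coord0_bounds[OF that(2)] that(1) by (auto simp: c_def)
  have "continuous_on ({0..1} \<times> cube) (\<lambda>p. \<psi> (snd p $ coord0))"
    by (rule continuous_on_compose2[OF \<psi>]) (auto intro!: continuous_intros dest: cube_coord0_bounds)
  then have F: "side_family X x0 (\<lambda>s u. \<alpha> (upd_coord0 u (c (s, u))))"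
    unfolding c_def by (intro side_family_comp_upd_coord0[OF \<alpha>] continuous_intros)
      (use c01 in \<open>auto simp: c_def\<close>)
  have "rel_homotopic X x0 (\<lambda>u. \<alpha> (upd_coord0 u (c (0, u)))) (\<lambda>u. \<alpha> (upd_coord0 u (c (1, u))))"
    by (rule side_family_rel_homotopic[OF F])
      (use assms(4,5) in \<open>auto simp: c_def intro!: Omega_cube_bdry[OF \<alpha>] upd_coord0_in_cube_bdry\<close>)
  then show ?thesis
    by (simp add: c_def)
qed

text \<open>The second and third pieces of the homotopy traverse \<open>\<beta>\<close> only over the coordinate range
  \<open>[s, 1]\<close>, so at \<open>s = 1\<close> they are constant.\<close>
lemma concat3_reverse_self_homotopic:
  fixes \<alpha> \<beta> :: "real^'n::finite \<Rightarrow> 'a::metric_space"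
  assumes \<alpha>: "\<alpha> \<in> Omega X x0" and \<beta>: "\<beta> \<in> Omega X x0"
  shows "rel_homotopic X x0 (concat3 \<alpha> (reverse \<beta>) \<beta>) (concat3 \<alpha> (\<lambda>_. x0) (\<lambda>_. x0))"
proof -
  define cG where "cG p = max (1 - snd p $ coord0) (fst p)" for p :: "real \<times> (real^'n)"
  define cK where "cK p = max (snd p $ coord0) (fst p)" for p :: "real \<times> (real^'n)"
  define G where "G = (\<lambda>s u. \<beta> (upd_coord0 u (cG (s, u))))"
  define K where "K = (\<lambda>s u. \<beta> (upd_coord0 u (cK (s, u))))"
  have fam: "side_family X x0 G" "side_family X x0 K"
    unfolding G_def K_def
    by (rule side_family_comp_upd_coord0[OF \<beta>];
        force simp: cG_def cK_def intro!: continuous_intros dest: cube_coord0_bounds)+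
  have \<beta>_ends: "\<beta> (upd_coord0 u 0) = x0" "\<beta> (upd_coord0 u 1) = x0" if "u \<in> cube" for u
    using Omega_cube_bdry[OF \<beta>] upd_coord0_in_cube_bdry[OF that] by auto
  have \<alpha>_ends: "\<alpha> (upd_coord0 u 0) = x0" "\<alpha> (upd_coord0 u 1) = x0" if "u \<in> cube" for u
    using Omega_cube_bdry[OF \<alpha>] upd_coord0_in_cube_bdry[OF that] by auto
  have "rel_homotopic X x0 (concat3 \<alpha> (G 0) (K 0)) (concat3 \<alpha> (G 1) (K 1))"
    by (rule side_family_rel_homotopic[OF side_family_concat3[OF side_family_const[OF \<alpha>] fam]])
      (auto simp: G_def K_def cG_def cK_def \<alpha>_ends \<beta>_ends)
  moreover have "G 0 u = reverse \<beta> u" "K 0 u = \<beta> u" "G 1 u = x0" "K 1 u = x0" if "u \<in> cube" for u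
  proof -
    have "max (1 - u $ coord0) 0 = 1 - u $ coord0" "max (u $ coord0) 0 = u $ coord0"
      "max (1 - u $ coord0) 1 = 1" "max (u $ coord0) 1 = 1"
      using cube_coord0_bounds[OF that] by auto
    then show "G 0 u = reverse \<beta> u" "K 0 u = \<beta> u" "G 1 u = x0" "K 1 u = x0"
      using \<beta>_ends[OF that] by (simp_all add: G_def K_def cG_def cK_def reverse_eq_upd_coord0)
  qed
  ultimately show ?thesis
    by (elim rel_homotopic_cong)
      (auto intro!: concat3_rel[where R = "(=)"] simp: upd_coord0_in_cube)
qed

lemma concat3_const_homotopic:
  assumes \<alpha>: "\<alpha> \<in> Omega X x0"
  shows "rel_homotopic X x0 (concat3 \<alpha> (\<lambda>_. x0) (\<lambda>_. x0)) \<alpha>"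
proof -
  have "rel_homotopic X x0 (\<lambda>t. \<alpha> (upd_coord0 t (min (3 * t $ coord0) 1))) \<alpha>"
    by (rule homotopic_reparam[OF \<alpha>]) (auto intro!: continuous_intros)
  moreover have "concat3 \<alpha> (\<lambda>_. x0) (\<lambda>_. x0) t = \<alpha> (upd_coord0 t (min (3 * t $ coord0) 1))"
    if "t \<in> cube" for t
    using Omega_cube_bdry[OF \<alpha> upd_coord0_in_cube_bdry[OF that]] by (auto simp: concat3_def min_def)
  ultimately show ?thesis
    by (elim rel_homotopic_cong) simp_all
qed

lemma concat3_cancel_right:
  assumes "\<alpha> \<in> Omega X x0" "\<beta> \<in> Omega X x0"
  shows "rel_homotopic X x0 (concat3 \<alpha> (reverse \<beta>) \<beta>) \<alpha>"
  using concat3_reverse_self_homotopic[OF assms] concat3_const_homotopic[OF assms(1)]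
  by (rule homotopic_with_trans)

lemma concat3_cancel_left:
  assumes \<beta>: "\<beta> \<in> Omega X x0" and \<gamma>: "\<gamma> \<in> Omega X x0"
  shows "rel_homotopic X x0 (concat3 \<beta> (reverse \<beta>) \<gamma>) \<gamma>"
proof -
  have "rel_homotopic X x0 (concat3 (reverse \<gamma>) \<beta> (reverse \<beta>)) (reverse \<gamma>)"
    using concat3_cancel_right[OF reverse_in_Omega[OF \<gamma>] reverse_in_Omega[OF \<beta>]] by simp
  then have "rel_homotopic X x0 (reverse (concat3 (reverse \<gamma>) \<beta> (reverse \<beta>))) (reverse (reverse \<gamma>))"
    by (rule homotopic_reverse)
  then show ?thesis
    by (rule rel_homotopic_cong)
      (simp_all add: reverse_concat3[OF reverse_in_Omega[OF \<gamma>] \<beta> reverse_in_Omega[OF \<beta>]])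
qed

section \<open>The uniform distance\<close>

lemma bdd_above_dist_cube:
  assumes "continuous_on cube \<alpha>" "continuous_on cube \<beta>"
  shows "bdd_above ((\<lambda>t. dist (\<alpha> t) (\<beta> t)) ` cube)"
proof -
  have "compact ((\<lambda>t. dist (\<alpha> t) (\<beta> t)) ` cube)"
    unfolding cube_def
    by (intro compact_continuous_image compact_cbox continuous_intros assms[unfolded cube_def])
  then show ?thesis
    by (intro bounded_imp_bdd_above compact_imp_bounded)
qed

lemma dist_le_mu:
  "continuous_on cube \<alpha> \<Longrightarrow> continuous_on cube \<beta> \<Longrightarrow> t \<in> cube \<Longrightarrow> dist (\<alpha> t) (\<beta> t) \<le> mu \<alpha> \<beta>"
  unfolding mu_def by (rule cSUP_upper) (simp_all add: bdd_above_dist_cube)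

lemma mu_le: "(\<And>t. t \<in> cube \<Longrightarrow> dist (\<alpha> t) (\<beta> t) \<le> c) \<Longrightarrow> mu \<alpha> \<beta> \<le> c"
  unfolding mu_def by (rule cSUP_least) (use zero_in_cube in auto)

lemma mu_nonneg: "continuous_on cube \<alpha> \<Longrightarrow> continuous_on cube \<beta> \<Longrightarrow> 0 \<le> mu \<alpha> \<beta>"
  using dist_le_mu[OF _ _ zero_in_cube] zero_le_dist order_trans by blast

lemma mu_self: "mu \<alpha> \<alpha> \<le> 0"
  by (rule mu_le) simp

lemma dist_upd_coord0_le_mu:
  assumes "continuous_on cube \<alpha>" "continuous_on cube \<beta>" "t \<in> cube" "0 \<le> c" "c \<le> 1"
  shows "dist (\<alpha> (upd_coord0 t c)) (\<beta> (upd_coord0 t c)) \<le> mu \<alpha> \<beta>"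
  using dist_le_mu[OF assms(1,2) upd_coord0_in_cube[OF assms(3-5)]] .

lemma mu_concat_le:
  fixes \<alpha> \<alpha>' \<beta> \<beta>' :: "real^'n::finite \<Rightarrow> 'a::metric_space"
  assumes "continuous_on cube \<alpha>" "continuous_on cube \<alpha>'"
    and "continuous_on cube \<beta>" "continuous_on cube \<beta>'"
  shows "mu (concat \<alpha> \<beta>) (concat \<alpha>' \<beta>') \<le> max (mu \<alpha> \<alpha>') (mu \<beta> \<beta>')"
proof (rule mu_le)
  fix t :: "real^'n" assume t: "t \<in> cube"
  show "dist (concat \<alpha> \<beta> t) (concat \<alpha>' \<beta>' t) \<le> max (mu \<alpha> \<alpha>') (mu \<beta> \<beta>')"
    using dist_upd_coord0_le_mu[OF assms(1,2) t] dist_upd_coord0_le_mu[OF assms(3,4) t]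
    by (intro concat_rel[where R = "\<lambda>x y. dist x y \<le> max (mu \<alpha> \<alpha>') (mu \<beta> \<beta>')", OF _ _ t])
      (simp_all add: le_max_iff_disj)
qed

lemma mu_reverse_le:
  fixes \<alpha> \<alpha>' :: "real^'n::finite \<Rightarrow> 'a::metric_space"
  assumes "continuous_on cube \<alpha>" "continuous_on cube \<alpha>'"
  shows "mu (reverse \<alpha>) (reverse \<alpha>') \<le> mu \<alpha> \<alpha>'"
proof (rule mu_le)
  fix t :: "real^'n" assume "t \<in> cube"
  then show "dist (reverse \<alpha> t) (reverse \<alpha>' t) \<le> mu \<alpha> \<alpha>'"
    unfolding reverse_eq_upd_coord0
    by (intro dist_upd_coord0_le_mu assms) (auto dest: cube_coord0_bounds)
qed

lemma homotopic_close_representatives: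
  fixes \<alpha> \<beta> \<beta>' \<gamma> :: "real^'n::finite \<Rightarrow> 'a::metric_space"
  assumes \<alpha>: "\<alpha> \<in> Omega X x0" and \<beta>: "\<beta> \<in> Omega X x0" and \<beta>': "\<beta>' \<in> Omega X x0"
    and \<gamma>: "\<gamma> \<in> Omega X x0" and \<beta>\<beta>': "rel_homotopic X x0 \<beta> \<beta>'"
  shows "\<exists>P Q. rel_homotopic X x0 \<alpha> P \<and> rel_homotopic X x0 \<gamma> Q \<and> mu P Q \<le> max (mu \<alpha> \<beta>) (mu \<beta>' \<gamma>)"
proof (intro exI conjI)
  have "rel_homotopic X x0 (concat3 \<alpha> (reverse \<beta>) \<beta>') (concat3 \<alpha> (reverse \<beta>) \<beta>)"
    by (intro homotopic_concat3 rel_homotopic_refl reverse_in_Omega homotopic_with_symD[OF \<beta>\<beta>'] \<alpha> \<beta>)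
  then have "rel_homotopic X x0 (concat3 \<alpha> (reverse \<beta>) \<beta>') \<alpha>"
    using concat3_cancel_right[OF \<alpha> \<beta>] by (rule homotopic_with_trans)
  then show "rel_homotopic X x0 \<alpha> (concat3 \<alpha> (reverse \<beta>) \<beta>')"
    by (rule homotopic_with_symD)
  show "rel_homotopic X x0 \<gamma> (concat3 \<beta> (reverse \<beta>) \<gamma>)"
    by (rule homotopic_with_symD[OF concat3_cancel_left[OF \<beta> \<gamma>]])
  have cont: "continuous_on cube \<alpha>" "continuous_on cube \<beta>"
    "continuous_on cube \<beta>'" "continuous_on cube \<gamma>"
    using \<alpha> \<beta> \<beta>' \<gamma> by (simp_all add: Omega_continuous_on)
  show "mu (concat3 \<alpha> (reverse \<beta>) \<beta>') (concat3 \<beta> (reverse \<beta>) \<gamma>) \<le> max (mu \<alpha> \<beta>) (mu \<beta>' \<gamma>)"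
  proof (rule mu_le)
    fix t :: "real^'n" assume t: "t \<in> cube"
    have "0 \<le> max (mu \<alpha> \<beta>) (mu \<beta>' \<gamma>)"
      using mu_nonneg[OF cont(1,2)] by linarith
    then show "dist (concat3 \<alpha> (reverse \<beta>) \<beta>' t) (concat3 \<beta> (reverse \<beta>) \<gamma> t)
        \<le> max (mu \<alpha> \<beta>) (mu \<beta>' \<gamma>)"
      using dist_upd_coord0_le_mu[OF cont(1,2) t] dist_upd_coord0_le_mu[OF cont(3,4) t]
      by (intro concat3_rel[where R = "\<lambda>x y. dist x y \<le> max (mu \<alpha> \<beta>) (mu \<beta>' \<gamma>)", OF _ _ _ t])
        (simp_all add: le_max_iff_disj)
  qed
qed

section \<open>The pseudometric on homotopy classes\<close>

lemma hclass_subset_Omega: "hclass X x0 \<alpha> \<subseteq> Omega X x0"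
  by (auto simp: hclass_def)

lemma hclass_self: "\<alpha> \<in> Omega X x0 \<Longrightarrow> \<alpha> \<in> hclass X x0 \<alpha>"
  unfolding hclass_def using rel_homotopic_refl by blast

lemma hclass_eq: "rel_homotopic X x0 \<alpha> \<beta> \<Longrightarrow> hclass X x0 \<alpha> = hclass X x0 \<beta>"
  unfolding hclass_def by (meson homotopic_with_symD homotopic_with_trans)

lemma hclass_in_pin: "\<alpha> \<in> Omega X x0 \<Longrightarrow> hclass X x0 \<alpha> \<in> pin X x0"
  by (simp add: pin_def)

lemma pin_eq_hclass:
  assumes "a \<in> pin X x0" "\<alpha> \<in> a"
  shows "a = hclass X x0 \<alpha>"
proof -
  obtain \<alpha>0 where \<alpha>0: "a = hclass X x0 \<alpha>0"
    using assms(1) by (auto simp: pin_def)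
  then have "rel_homotopic X x0 \<alpha>0 \<alpha>"
    using assms(2) by (simp add: hclass_def)
  then show ?thesis
    using \<alpha>0 by (simp add: hclass_eq)
qed

lemma pin_homotopic: "a \<in> pin X x0 \<Longrightarrow> \<alpha> \<in> a \<Longrightarrow> \<beta> \<in> a \<Longrightarrow> rel_homotopic X x0 \<alpha> \<beta>"
  by (auto simp: hclass_def dest!: pin_eq_hclass)

lemma pin_homotopic_closed:
  "a \<in> pin X x0 \<Longrightarrow> \<alpha> \<in> a \<Longrightarrow> rel_homotopic X x0 \<alpha> \<beta> \<Longrightarrow> \<beta> \<in> a"
  by (auto simp: hclass_def dest: rel_homotopic_imp_Omega dest!: pin_eq_hclass)

lemma pin_subset_Omega: "a \<in> pin X x0 \<Longrightarrow> a \<subseteq> Omega X x0"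
  by (auto simp: pin_def hclass_def)

lemma pin_nonempty: "a \<in> pin X x0 \<Longrightarrow> a \<noteq> {}"
  by (auto simp: pin_def dest: hclass_self)

lemma pin_mult_eq_hclass:
  assumes "a \<in> pin X x0" "b \<in> pin X x0" "\<alpha> \<in> a" "\<beta> \<in> b"
  shows "pin_mult X x0 a b = hclass X x0 (concat \<alpha> \<beta>)"
proof -
  have "(SOME \<alpha>. \<alpha> \<in> a) \<in> a" "(SOME \<beta>. \<beta> \<in> b) \<in> b"
    using pin_nonempty[OF assms(1)] pin_nonempty[OF assms(2)] by (simp_all add: some_in_eq)
  then have "rel_homotopic X x0 (concat (SOME \<alpha>. \<alpha> \<in> a) (SOME \<beta>. \<beta> \<in> b)) (concat \<alpha> \<beta>)"
    using assms by (intro homotopic_concat pin_homotopic)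
  then show ?thesis
    unfolding pin_mult_def by (rule hclass_eq)
qed

lemma pin_inv_eq_hclass:
  assumes "a \<in> pin X x0" "\<alpha> \<in> a"
  shows "pin_inv X x0 a = hclass X x0 (reverse \<alpha>)"
proof -
  have "(SOME \<alpha>. \<alpha> \<in> a) \<in> a"
    using pin_nonempty[OF assms(1)] by (simp add: some_in_eq)
  then have "rel_homotopic X x0 (reverse (SOME \<alpha>. \<alpha> \<in> a)) (reverse \<alpha>)"
    using assms by (intro homotopic_reverse pin_homotopic)
  then show ?thesis
    unfolding pin_inv_def by (rule hclass_eq)
qed

lemma rho_le_mu:
  assumes "a \<subseteq> Omega X x0" "b \<subseteq> Omega X x0" "\<alpha> \<in> a" "\<beta> \<in> b"
  shows "rho a b \<le> mu \<alpha> \<beta>"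
proof -
  have "0 \<le> mu \<alpha>' \<beta>'" if "\<alpha>' \<in> a" "\<beta>' \<in> b" for \<alpha>' \<beta>'
    using assms(1,2) that by (meson Omega_continuous_on mu_nonneg subsetD)
  then have bdd: "bdd_below ((\<lambda>p. mu (fst p) (snd p)) ` (a \<times> b))"
    by (intro bdd_belowI2[of _ 0]) auto
  show ?thesis
    using cINF_lower[OF bdd, of "(\<alpha>, \<beta>)"] assms(3,4) by (simp add: rho_def)
qed

lemma rho_less_imp_mu_less:
  assumes "a \<noteq> {}" "b \<noteq> {}" "rho a b < e"
  shows "\<exists>\<alpha>\<in>a. \<exists>\<beta>\<in>b. mu \<alpha> \<beta> < e"
  using cInf_lessD[of "(\<lambda>p. mu (fst p) (snd p)) ` (a \<times> b)" e] assms by (auto simp: rho_def)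

lemma rho_nonneg: "a \<in> pin X x0 \<Longrightarrow> b \<in> pin X x0 \<Longrightarrow> 0 \<le> rho a b"
  unfolding rho_def
  by (rule cINF_greatest)
    (auto simp: pin_nonempty intro!: mu_nonneg Omega_continuous_on dest!: pin_subset_Omega)

lemma rho_self: "a \<in> pin X x0 \<Longrightarrow> rho a a = 0"
  using rho_nonneg[of a X x0] rho_le_mu[OF pin_subset_Omega pin_subset_Omega] pin_nonempty mu_self
  by (metis all_not_in_conv order_antisym order_trans)

lemma rho_triangle:
  assumes a: "a \<in> pin X x0" and b: "b \<in> pin X x0" and c: "c \<in> pin X x0"
  shows "rho a c \<le> rho a b + rho b c"
proof (rule field_le_epsilon)
  fix \<epsilon> :: real assume "0 < \<epsilon>"
  then obtain \<alpha> \<beta> \<beta>' \<gamma> where "\<alpha> \<in> a" "\<beta> \<in> b" "\<beta>' \<in> b" "\<gamma> \<in> c"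
    and \<alpha>\<beta>: "mu \<alpha> \<beta> < rho a b + \<epsilon>" and \<beta>'\<gamma>: "mu \<beta>' \<gamma> < rho b c + \<epsilon>"
    using rho_less_imp_mu_less[OF pin_nonempty[OF a] pin_nonempty[OF b], of "rho a b + \<epsilon>"]
      rho_less_imp_mu_less[OF pin_nonempty[OF b] pin_nonempty[OF c], of "rho b c + \<epsilon>"]
    by auto
  have "rel_homotopic X x0 \<beta> \<beta>'"
    using b \<open>\<beta> \<in> b\<close> \<open>\<beta>' \<in> b\<close> by (rule pin_homotopic)
  moreover have "\<alpha> \<in> Omega X x0" "\<beta> \<in> Omega X x0" "\<beta>' \<in> Omega X x0" "\<gamma> \<in> Omega X x0"
    using a b c \<open>\<alpha> \<in> a\<close> \<open>\<beta> \<in> b\<close> \<open>\<beta>' \<in> b\<close> \<open>\<gamma> \<in> c\<close> pin_subset_Omega by blast+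
  ultimately obtain P Q where "rel_homotopic X x0 \<alpha> P" "rel_homotopic X x0 \<gamma> Q"
    and PQ: "mu P Q \<le> max (mu \<alpha> \<beta>) (mu \<beta>' \<gamma>)"
    using homotopic_close_representatives by blast
  then have "P \<in> a" "Q \<in> c"
    using a c \<open>\<alpha> \<in> a\<close> \<open>\<gamma> \<in> c\<close> by (blast intro: pin_homotopic_closed)+
  then have "rho a c \<le> mu P Q"
    using a c by (intro rho_le_mu pin_subset_Omega)
  moreover have "max (mu \<alpha> \<beta>) (mu \<beta>' \<gamma>) < rho a b + rho b c + \<epsilon>"
    using \<alpha>\<beta> \<beta>'\<gamma> rho_nonneg[OF a b] rho_nonneg[OF b c] by simp
  ultimately show "rho a c \<le> rho a b + rho b c + \<epsilon>"
    using PQ by linarith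
qed

lemma rho_hclass_le_mu:
  "\<alpha> \<in> Omega X x0 \<Longrightarrow> \<beta> \<in> Omega X x0 \<Longrightarrow> rho (hclass X x0 \<alpha>) (hclass X x0 \<beta>) \<le> mu \<alpha> \<beta>"
  by (rule rho_le_mu[OF hclass_subset_Omega hclass_subset_Omega]) (simp_all add: hclass_self)

lemma pin_mult_in_pin:
  assumes "a \<in> pin X x0" "b \<in> pin X x0"
  shows "pin_mult X x0 a b \<in> pin X x0"
proof -
  obtain \<alpha> \<beta> where "\<alpha> \<in> a" "\<beta> \<in> b"
    using assms pin_nonempty by blast
  moreover have "\<alpha> \<in> Omega X x0" "\<beta> \<in> Omega X x0"
    using calculation assms pin_subset_Omega by blast+
  ultimately show ?thesis
    by (simp add: pin_mult_eq_hclass[OF assms] hclass_in_pin concat_in_Omega)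
qed

lemma pin_inv_in_pin:
  assumes "a \<in> pin X x0"
  shows "pin_inv X x0 a \<in> pin X x0"
proof -
  obtain \<alpha> where "\<alpha> \<in> a"
    using assms pin_nonempty by blast
  moreover have "\<alpha> \<in> Omega X x0"
    using calculation assms pin_subset_Omega by blast
  ultimately show ?thesis
    by (simp add: pin_inv_eq_hclass[OF assms] hclass_in_pin reverse_in_Omega)
qed

lemma rho_pin_mult_less:
  assumes a: "a \<in> pin X x0" "a' \<in> pin X x0" and b: "b \<in> pin X x0" "b' \<in> pin X x0"
    and "rho a a' < e" "rho b b' < e"
  shows "rho (pin_mult X x0 a b) (pin_mult X x0 a' b') < e"
proof -
  obtain \<alpha> \<alpha>' \<beta> \<beta>' where "\<alpha> \<in> a" "\<alpha>' \<in> a'" "\<beta> \<in> b" "\<beta>' \<in> b'"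
    and "mu \<alpha> \<alpha>' < e" "mu \<beta> \<beta>' < e"
    using rho_less_imp_mu_less[OF pin_nonempty[OF a(1)] pin_nonempty[OF a(2)] assms(5)]
      rho_less_imp_mu_less[OF pin_nonempty[OF b(1)] pin_nonempty[OF b(2)] assms(6)] by blast
  moreover have \<Omega>: "\<alpha> \<in> Omega X x0" "\<alpha>' \<in> Omega X x0" "\<beta> \<in> Omega X x0" "\<beta>' \<in> Omega X x0"
    using calculation a b pin_subset_Omega by blast+
  ultimately have "rho (hclass X x0 (concat \<alpha> \<beta>)) (hclass X x0 (concat \<alpha>' \<beta>')) < e"
    using rho_hclass_le_mu[OF concat_in_Omega[OF \<Omega>(1,3)] concat_in_Omega[OF \<Omega>(2,4)]]
      mu_concat_le[OF \<Omega>[THEN Omega_continuous_on]] by simp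
  then show ?thesis
    using a b \<open>\<alpha> \<in> a\<close> \<open>\<alpha>' \<in> a'\<close> \<open>\<beta> \<in> b\<close> \<open>\<beta>' \<in> b'\<close> by (simp add: pin_mult_eq_hclass)
qed

lemma rho_pin_inv_less:
  assumes a: "a \<in> pin X x0" "a' \<in> pin X x0" and "rho a a' < e"
  shows "rho (pin_inv X x0 a) (pin_inv X x0 a') < e"
proof -
  obtain \<alpha> \<alpha>' where "\<alpha> \<in> a" "\<alpha>' \<in> a'" "mu \<alpha> \<alpha>' < e"
    using rho_less_imp_mu_less[OF pin_nonempty[OF a(1)] pin_nonempty[OF a(2)] assms(3)] by blast
  moreover have \<Omega>: "\<alpha> \<in> Omega X x0" "\<alpha>' \<in> Omega X x0"
    using calculation a pin_subset_Omega by blast+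
  ultimately have "rho (hclass X x0 (reverse \<alpha>)) (hclass X x0 (reverse \<alpha>')) < e"
    using rho_hclass_le_mu[OF reverse_in_Omega[OF \<Omega>(1)] reverse_in_Omega[OF \<Omega>(2)]]
      mu_reverse_le[OF \<Omega>[THEN Omega_continuous_on]] by simp
  then show ?thesis
    using a \<open>\<alpha> \<in> a\<close> \<open>\<alpha>' \<in> a'\<close> by (simp add: pin_inv_eq_hclass)
qed

section \<open>Topologies given by balls\<close>

definition ball_topology :: "'b set \<Rightarrow> ('b \<Rightarrow> 'b \<Rightarrow> real) \<Rightarrow> 'b topology" where
  "ball_topology C D = topology (\<lambda>U. U \<subseteq> C \<and> (\<forall>a\<in>U. \<exists>e>0. \<forall>b\<in>C. D a b < e \<longrightarrow> b \<in> U))"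

lemma openin_ball_topology:
  "openin (ball_topology C D) U \<longleftrightarrow> U \<subseteq> C \<and> (\<forall>a\<in>U. \<exists>e>0. \<forall>b\<in>C. D a b < e \<longrightarrow> b \<in> U)"
proof -
  have "istopology (\<lambda>U. U \<subseteq> C \<and> (\<forall>a\<in>U. \<exists>e>0. \<forall>b\<in>C. D a b < e \<longrightarrow> b \<in> U))"
    unfolding istopology_def
  proof (rule conjI; intro allI impI)
    fix S T assume S: "S \<subseteq> C \<and> (\<forall>a\<in>S. \<exists>e>0. \<forall>b\<in>C. D a b < e \<longrightarrow> b \<in> S)"
      and T: "T \<subseteq> C \<and> (\<forall>a\<in>T. \<exists>e>0. \<forall>b\<in>C. D a b < e \<longrightarrow> b \<in> T)"
    show "S \<inter> T \<subseteq> C \<and> (\<forall>a\<in>S \<inter> T. \<exists>e>0. \<forall>b\<in>C. D a b < e \<longrightarrow> b \<in> S \<inter> T)"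
    proof (intro conjI ballI)
      fix a assume "a \<in> S \<inter> T"
      then obtain e1 e2 where "0 < e1" "\<forall>b\<in>C. D a b < e1 \<longrightarrow> b \<in> S"
        and "0 < e2" "\<forall>b\<in>C. D a b < e2 \<longrightarrow> b \<in> T"
        using S T by blast
      then show "\<exists>e>0. \<forall>b\<in>C. D a b < e \<longrightarrow> b \<in> S \<inter> T"
        by (intro exI[of _ "min e1 e2"]) simp
    qed (use S in blast)
  next
    fix K assume K: "\<forall>U\<in>K. U \<subseteq> C \<and> (\<forall>a\<in>U. \<exists>e>0. \<forall>b\<in>C. D a b < e \<longrightarrow> b \<in> U)"
    show "\<Union>K \<subseteq> C \<and> (\<forall>a\<in>\<Union>K. \<exists>e>0. \<forall>b\<in>C. D a b < e \<longrightarrow> b \<in> \<Union>K)"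
    proof (intro conjI ballI)
      fix a assume "a \<in> \<Union>K"
      then obtain U where "U \<in> K" "a \<in> U"
        by blast
      moreover obtain e where "0 < e" "\<forall>b\<in>C. D a b < e \<longrightarrow> b \<in> U"
        using K calculation by blast
      ultimately show "\<exists>e>0. \<forall>b\<in>C. D a b < e \<longrightarrow> b \<in> \<Union>K"
        by blast
    qed (use K in blast)
  qed
  then show ?thesis
    by (simp only: ball_topology_def topology_inverse')
qed

lemma topspace_ball_topology [simp]: "topspace (ball_topology C D) = C"
proof
  have "openin (ball_topology C D) C"
    unfolding openin_ball_topology using zero_less_one by blast
  then show "C \<subseteq> topspace (ball_topology C D)"
    by (rule openin_subset)
  show "topspace (ball_topology C D) \<subseteq> C"
    using openin_topspace[of "ball_topology C D", unfolded openin_ball_topology] by (rule conjunct1)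
qed

lemma openin_ball_topology_ball:
  assumes triangle: "\<And>a b c. a \<in> C \<Longrightarrow> b \<in> C \<Longrightarrow> c \<in> C \<Longrightarrow> D a c \<le> D a b + D b c" and "a \<in> C"
  shows "openin (ball_topology C D) {b \<in> C. D a b < e}"
  unfolding openin_ball_topology
proof (intro conjI ballI)
  fix b assume b: "b \<in> {b \<in> C. D a b < e}"
  have "c \<in> {b \<in> C. D a b < e}" if "c \<in> C" "D b c < e - D a b" for c
    using triangle[OF \<open>a \<in> C\<close> _ that(1), of b] b that by auto
  moreover have "0 < e - D a b"
    using b by simp
  ultimately show "\<exists>d>0. \<forall>c\<in>C. D b c < d \<longrightarrow> c \<in> {b \<in> C. D a b < e}"
    by blast
qed auto

lemma continuous_map_ball_topology:
  assumes "f ` C \<subseteq> C'"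
    and "\<And>a e. a \<in> C \<Longrightarrow> 0 < e \<Longrightarrow> \<exists>d>0. \<forall>b\<in>C. D a b < d \<longrightarrow> D' (f a) (f b) < e"
  shows "continuous_map (ball_topology C D) (ball_topology C' D') f"
  unfolding continuous_map_def
proof (intro conjI allI impI)
  fix U assume "openin (ball_topology C' D') U"
  then have U: "U \<subseteq> C'" "\<And>c. c \<in> U \<Longrightarrow> \<exists>e>0. \<forall>c'\<in>C'. D' c c' < e \<longrightarrow> c' \<in> U"
    by (auto simp: openin_ball_topology)
  show "openin (ball_topology C D) {a \<in> topspace (ball_topology C D). f a \<in> U}"
    unfolding openin_ball_topology topspace_ball_topology
  proof (intro conjI ballI)
    fix a assume a: "a \<in> {a \<in> C. f a \<in> U}"
    then obtain e where "0 < e" "\<forall>c'\<in>C'. D' (f a) c' < e \<longrightarrow> c' \<in> U"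
      using U(2) by blast
    then show "\<exists>d>0. \<forall>b\<in>C. D a b < d \<longrightarrow> b \<in> {a \<in> C. f a \<in> U}"
      using assms a by (metis (mono_tags, lifting) image_subset_iff mem_Collect_eq)
  qed auto
qed (use assms(1) in auto)

lemma continuous_map_prod_ball_topology:
  assumes triangle: "\<And>a b c. a \<in> C \<Longrightarrow> b \<in> C \<Longrightarrow> c \<in> C \<Longrightarrow> D a c \<le> D a b + D b c"
    and refl: "\<And>a. a \<in> C \<Longrightarrow> D a a = 0"
    and into: "\<And>a b. a \<in> C \<Longrightarrow> b \<in> C \<Longrightarrow> f a b \<in> C"
    and cont: "\<And>a b e. a \<in> C \<Longrightarrow> b \<in> C \<Longrightarrow> 0 < e \<Longrightarrow>
      \<exists>d>0. \<forall>a'\<in>C. \<forall>b'\<in>C. D a a' < d \<longrightarrow> D b b' < d \<longrightarrow> D (f a b) (f a' b') < e"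
  shows "continuous_map (prod_topology (ball_topology C D) (ball_topology C D)) (ball_topology C D)
    (\<lambda>(a, b). f a b)"
  unfolding continuous_map_def
proof (intro conjI allI impI)
  fix U assume "openin (ball_topology C D) U"
  then have U: "\<And>c. c \<in> U \<Longrightarrow> \<exists>e>0. \<forall>c'\<in>C. D c c' < e \<longrightarrow> c' \<in> U"
    by (auto simp: openin_ball_topology)
  let ?S = "{p \<in> topspace (prod_topology (ball_topology C D) (ball_topology C D)).
    (case p of (a, b) \<Rightarrow> f a b) \<in> U}"
  show "openin (prod_topology (ball_topology C D) (ball_topology C D)) ?S"
  proof (subst openin_subopen, intro ballI)
    fix p assume "p \<in> ?S"
    then obtain a b where p: "p = (a, b)" "a \<in> C" "b \<in> C" "f a b \<in> U"
      by auto
    then obtain e where "0 < e" "\<forall>c'\<in>C. D (f a b) c' < e \<longrightarrow> c' \<in> U"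
      using U by blast
    then obtain d where "0 < d" and d: "\<forall>a'\<in>C. \<forall>b'\<in>C. D a a' < d \<longrightarrow> D b b' < d \<longrightarrow> f a' b' \<in> U"
      using cont[OF p(2,3)] into by metis
    show "\<exists>T. openin (prod_topology (ball_topology C D) (ball_topology C D)) T \<and> p \<in> T \<and> T \<subseteq> ?S"
    proof (intro exI conjI)
      show "openin (prod_topology (ball_topology C D) (ball_topology C D))
          ({a' \<in> C. D a a' < d} \<times> {b' \<in> C. D b b' < d})"
        using openin_ball_topology_ball[of C D, OF triangle] p(2,3)
        by (simp add: openin_prod_Times_iff)
      show "p \<in> {a' \<in> C. D a a' < d} \<times> {b' \<in> C. D b b' < d}"
        using p refl \<open>0 < d\<close> by simp
      show "{a' \<in> C. D a a' < d} \<times> {b' \<in> C. D b b' < d} \<subseteq> ?S"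
        using d by auto
    qed
  qed
qed (use into in auto)

lemma Omega_top_eq_ball_topology: "Omega_top X x0 = ball_topology (Omega X x0) mu"
  by (simp add: Omega_top_def ball_topology_def)

lemma rho_top_eq_ball_topology: "rho_top X x0 = ball_topology (pin X x0) rho"
  by (simp add: rho_top_def ball_topology_def)

lemma continuous_map_hclass:
  "continuous_map (Omega_top X x0 :: (real^'n::finite \<Rightarrow> 'a::metric_space) topology)
     (rho_top X x0) (hclass X x0)"
  unfolding Omega_top_eq_ball_topology rho_top_eq_ball_topology
proof (rule continuous_map_ball_topology)
  show "hclass X x0 ` Omega X x0 \<subseteq> pin X x0"
    by (simp add: pin_def)
  show "\<exists>d>0. \<forall>\<beta>\<in>Omega X x0. mu \<alpha> \<beta> < d \<longrightarrow> rho (hclass X x0 \<alpha>) (hclass X x0 \<beta>) < e"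
    if "\<alpha> \<in> Omega X x0" "0 < e" for \<alpha> :: "real^'n \<Rightarrow> 'a" and e
    using that rho_hclass_le_mu by (meson le_less_trans)
qed

lemma group_topology_pin_rho_top:
  "group_topology_pin X x0 (rho_top X x0 :: (real^'n::finite \<Rightarrow> 'a::metric_space) set topology)"
  unfolding group_topology_pin_def rho_top_eq_ball_topology
proof (intro conjI)
  show "continuous_map (prod_topology (ball_topology (pin X x0) rho) (ball_topology (pin X x0) rho))
      (ball_topology (pin X x0) rho) (\<lambda>(a, b). pin_mult X x0 a b)"
  proof (rule continuous_map_prod_ball_topology)
    show "\<exists>d>0. \<forall>a'\<in>pin X x0. \<forall>b'\<in>pin X x0. rho a a' < d \<longrightarrow> rho b b' < d \<longrightarrow>
        rho (pin_mult X x0 a b) (pin_mult X x0 a' b') < e"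
      if "a \<in> pin X x0" "b \<in> pin X x0" "0 < e" for a b e
      using that by (intro exI[of _ e]) (auto intro: rho_pin_mult_less)
  qed (simp_all add: rho_triangle rho_self pin_mult_in_pin)
  show "continuous_map (ball_topology (pin X x0) rho) (ball_topology (pin X x0) rho) (pin_inv X x0)"
  proof (rule continuous_map_ball_topology)
    fix a and e :: real assume "a \<in> pin X x0" "0 < e"
    then show "\<exists>d>0. \<forall>a'\<in>pin X x0. rho a a' < d \<longrightarrow> rho (pin_inv X x0 a) (pin_inv X x0 a') < e"
      by (intro exI[of _ e]) (auto intro: rho_pin_inv_less)
  qed (auto intro: pin_inv_in_pin)
qed simp

lemma istopology_preimage_openin: "istopology (\<lambda>U. U \<subseteq> S \<and> openin T {x \<in> C. f x \<in> U})"
  unfolding istopology_def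
proof (rule conjI; intro allI impI)
  fix U V assume "U \<subseteq> S \<and> openin T {x \<in> C. f x \<in> U}" "V \<subseteq> S \<and> openin T {x \<in> C. f x \<in> V}"
  moreover have "{x \<in> C. f x \<in> U \<inter> V} = {x \<in> C. f x \<in> U} \<inter> {x \<in> C. f x \<in> V}"
    by blast
  ultimately show "U \<inter> V \<subseteq> S \<and> openin T {x \<in> C. f x \<in> U \<inter> V}"
    by auto
next
  fix K assume K: "\<forall>U\<in>K. U \<subseteq> S \<and> openin T {x \<in> C. f x \<in> U}"
  have "{x \<in> C. f x \<in> \<Union>K} = (\<Union>U\<in>K. {x \<in> C. f x \<in> U})"
    by blast
  then show "\<Union>K \<subseteq> S \<and> openin T {x \<in> C. f x \<in> \<Union>K}"
    using K by auto
qed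

theorem proposition4p13:
  fixes X :: "'a::metric_space set" and x0 :: 'a
  assumes "path_connected X" and "x0 \<in> X"
  shows "continuous_map (Omega_top X x0 :: (real^'n::finite \<Rightarrow> 'a) topology) (rho_top X x0) (hclass X x0)
     \<and> (\<forall>U. openin (rho_top X x0 :: (real^'n \<Rightarrow> 'a) set topology) U \<longrightarrow> openin (quot_top X x0) U)
     \<and> (\<forall>U. openin (rho_top X x0 :: (real^'n \<Rightarrow> 'a) set topology) U \<longrightarrow> openin (tau_top X x0) U)"
proof (intro conjI allI impI)
  show cont: "continuous_map (Omega_top X x0 :: (real^'n::finite \<Rightarrow> 'a) topology)
      (rho_top X x0) (hclass X x0)"
    by (rule continuous_map_hclass)
  fix U assume "openin (rho_top X x0 :: (real^'n \<Rightarrow> 'a) set topology) U"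
  then have "U \<subseteq> pin X x0" "openin (Omega_top X x0) {\<alpha> \<in> Omega X x0. hclass X x0 \<alpha> \<in> U}"
    using cont by (auto simp: continuous_map_def rho_top_eq_ball_topology openin_ball_topology
        Omega_top_eq_ball_topology)
  then show "openin (quot_top X x0) U"
    by (simp add: quot_top_def istopology_preimage_openin)
next
  fix U assume "openin (rho_top X x0 :: (real^'n \<Rightarrow> 'a) set topology) U"
  then show "openin (tau_top X x0) U"
    unfolding tau_top_def using group_topology_pin_rho_top continuous_map_hclass
    by (blast intro: topology_generated_by_Basis)
qed

end
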